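(* Let $\varphi$ be an automorphism of $E$ with $\varphi^2=\mathrm{id}_E$ and let $\beta=\{e_1,e_2,\ldots\}$ be a basis of $L$. Let $I=\{n\mid\varphi(e_n)=\pm e_n\}$, $I^+=\{i\in I\mid\varphi(e_i)=e_i\}$, $I^-=\{i\in I\mid\varphi(e_i)=-e_i\}$, $J=\mathbb{N}\setminus I$. (1) If $I^+$ is infinite, $I^-$ is finite with $|I^-|=k$, and $J$ is infinite, then $T_2(E_\varphi)\subseteq T_2(E_{k^\ast})$. (2) If $I^+$ is finite with $|I^+|=k$, $I^-$ is infinite and $J$ is infinite, then $T_2(E_\varphi)\subseteq T_2(E_k)$.
   Context: $F$ is a field of characteristic zero, $L$ an infinite-dimensional $F$-vector space with basis $e_1,e_2,\ldots$, $E$ its Grassmann algebra. For an automorphism $\varphi$ of $E$ of order dividing 2, $E_\varphi$ is the $\mathbb{Z}_2$-grading on $E$ by the eigenspaces of $\varphi$ for $1$ (degree 0) and $-1$ (degree 1). $E_k$ is the $\mathbb{Z}_2$-grading on $E$ where $e_1,\ldots,e_k$ have degree $0$ and all other $e_i$ degree $1$; $E_{k^\ast}$ is the grading where $e_1,\ldots,e_k$ have degree $1$ and all other $e_i$ degree $0$. $T_2(A)$ is the ideal of $\mathbb{Z}_2$-graded polynomial identities of a superalgebra $A$ in the free algebra $F\langle Y\cup Z\rangle$ ($Y$ even variables, $Z$ odd variables). *)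

theory Defs
  imports Main "HOL-Library.FSet" "HOL-Library.Poly_Mapping"
begin

text \<open>Grassmann algebra E over a field 'a: finitely supported F-linear combinations
of monomials e_S, S a finite set of generator indices (e_S = e_{s1}...e_{sm}, s1<...<sm).
Generators e_1, e_2, ... of the paper are indexed here by 0, 1, 2, ...\<close>

type_synonym 'a grass = "nat fset \<Rightarrow>\<^sub>0 'a"

definition gsign :: "nat fset \<Rightarrow> nat fset \<Rightarrow> 'a::field" where
  "gsign S T = (-1) ^ card {(s,t). s |\<in>| S \<and> t |\<in>| T \<and> t < s}"

definition gmult :: "'a::field grass \<Rightarrow> 'a grass \<Rightarrow> 'a grass" where
  "gmult x y = (\<Sum>S\<in>Poly_Mapping.keys x. \<Sum>T\<in>Poly_Mapping.keys y.
      if S |\<inter>| T = {||}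
      then Poly_Mapping.single (S |\<union>| T) (gsign S T * Poly_Mapping.lookup x S * Poly_Mapping.lookup y T)
      else 0)"

definition gone :: "'a::field grass" where
  "gone = Poly_Mapping.single {||} 1"

definition gsmult :: "'a::field \<Rightarrow> 'a grass \<Rightarrow> 'a grass" where
  "gsmult c x = gmult (Poly_Mapping.single {||} c) x"

definition gen :: "nat \<Rightarrow> 'a::field grass" where
  "gen n = Poly_Mapping.single {|n|} 1"

definition grass_aut :: "('a::field grass \<Rightarrow> 'a grass) \<Rightarrow> bool" where
  "grass_aut \<phi> \<longleftrightarrow> bij \<phi>
     \<and> (\<forall>x y. \<phi> (x + y) = \<phi> x + \<phi> y)
     \<and> (\<forall>c x. \<phi> (gsmult c x) = gsmult c (\<phi> x))
     \<and> (\<forall>x y. \<phi> (gmult x y) = gmult (\<phi> x) (\<phi> y))"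

text \<open>Free algebra F<Y \<union> Z>: Y even variables, Z odd variables.
Polynomials are finitely supported functions from words to coefficients.\<close>
datatype gvar = Yv nat | Zv nat

type_synonym 'a freepoly = "gvar list \<Rightarrow>\<^sub>0 'a"

definition gword :: "(gvar \<Rightarrow> 'a::field grass) \<Rightarrow> gvar list \<Rightarrow> 'a grass" where
  "gword \<sigma> w = foldr (\<lambda>v acc. gmult (\<sigma> v) acc) w gone"

definition geval :: "(gvar \<Rightarrow> 'a::field grass) \<Rightarrow> 'a freepoly \<Rightarrow> 'a grass" where
  "geval \<sigma> f = (\<Sum>w\<in>Poly_Mapping.keys f. gsmult (Poly_Mapping.lookup f w) (gword \<sigma> w))"

text \<open>T_2 of a Z_2-grading of E given by its homogeneous components A0 (even), A1 (odd).\<close>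
definition T2 :: "'a::field grass set \<Rightarrow> 'a grass set \<Rightarrow> 'a freepoly set" where
  "T2 A0 A1 = {f. \<forall>\<sigma>. (\<forall>i. \<sigma> (Yv i) \<in> A0) \<and> (\<forall>i. \<sigma> (Zv i) \<in> A1) \<longrightarrow> geval \<sigma> f = 0}"

definition Ephi0 :: "('a::field grass \<Rightarrow> 'a grass) \<Rightarrow> 'a grass set" where
  "Ephi0 \<phi> = {x. \<phi> x = x}"
definition Ephi1 :: "('a::field grass \<Rightarrow> 'a grass) \<Rightarrow> 'a grass set" where
  "Ephi1 \<phi> = {x. \<phi> x = - x}"

text \<open>Grading of E induced by declaring the generators with index in D odd and the rest even:
component of degree b is spanned by monomials e_S with |S \<inter> D| of parity b.\<close>
definition Edeg :: "nat set \<Rightarrow> bool \<Rightarrow> 'a::field grass set" where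
  "Edeg D b = {x. \<forall>S\<in>Poly_Mapping.keys x. odd (card (fset S \<inter> D)) = b}"

text \<open>E_k: e_1..e_k even, others odd (0-based indices 0..k-1 even).\<close>
definition Ek0 :: "nat \<Rightarrow> 'a::field grass set" where "Ek0 k = Edeg {k..} False"
definition Ek1 :: "nat \<Rightarrow> 'a::field grass set" where "Ek1 k = Edeg {k..} True"
text \<open>E_{k*}: e_1..e_k odd, others even.\<close>
definition Eks0 :: "nat \<Rightarrow> 'a::field grass set" where "Eks0 k = Edeg {..<k} False"
definition Eks1 :: "nat \<Rightarrow> 'a::field grass set" where "Eks1 k = Edeg {..<k} True"

end

theory Submission imports Defs "HOL-Library.Infinite_Set" begin

text \<open>Every generator e_i with i in I+ or I- is homogeneous for E_\<phi>. Enumerate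
the k indices of the finite one of these two sets, followed by infinitely many indices of the
infinite one, by a strictly increasing map r. The relabelling e_i \<mapsto> e_(r i) extends to an
injective algebra endomorphism of E (monotonicity of r preserves the signs of the Grassmann
product), and it sends the homogeneous components of E_k* (resp. E_k) into those of E_\<phi>.
Evaluating a graded identity of E_\<phi> through this embedding shows that it is an identity of
E_k* (resp. E_k).\<close>

lemma poly_mapping_sum_single_lookup:
  "x = (\<Sum>T\<in>Poly_Mapping.keys x. Poly_Mapping.single T (Poly_Mapping.lookup x T))"
proof (rule poly_mapping_eqI)
  fix U
  have "(\<Sum>T\<in>Poly_Mapping.keys x. Poly_Mapping.lookup (Poly_Mapping.single T (Poly_Mapping.lookup x T)) U)
      = (\<Sum>T\<in>Poly_Mapping.keys x. if T = U then Poly_Mapping.lookup x T else 0)"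
    by (rule sum.cong) (auto simp: lookup_single when_def)
  then show "Poly_Mapping.lookup x U
      = Poly_Mapping.lookup (\<Sum>T\<in>Poly_Mapping.keys x. Poly_Mapping.single T (Poly_Mapping.lookup x T)) U"
    by (simp add: lookup_sum in_keys_iff)
qed

lemma gmult_single:
  "gmult (Poly_Mapping.single S a) (Poly_Mapping.single T b) =
   (if S |\<inter>| T = {||} then Poly_Mapping.single (S |\<union>| T) (gsign S T * a * b) else (0::'a::field grass))"
  by (cases "a = 0"; cases "b = 0") (auto simp: gmult_def)

lemma gsign_empty_left [simp]: "gsign {||} T = 1"
  and gsign_empty_right [simp]: "gsign S {||} = 1"
  by (simp_all add: gsign_def)

lemma gsign_square: "gsign S T * gsign S T = (1::'a::field)"
  by (simp add: gsign_def power_mult_distrib[symmetric] flip: power_add mult_2)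

lemma gmult_gone_left [simp]: "gmult gone x = x"
  and gmult_gone_right [simp]: "gmult x gone = x"
  by (simp_all add: gmult_def gone_def flip: poly_mapping_sum_single_lookup)

lemma gsmult_gone: "gsmult c gone = Poly_Mapping.single {||} c"
  by (simp add: gsmult_def gone_def gmult_single)

lemma gen_neq_uminus_gen: "gen i \<noteq> (- gen i :: 'a::field_char_0 grass)"
proof
  assume "gen i = (- gen i :: 'a grass)"
  then have "Poly_Mapping.lookup (gen i :: 'a grass) {|i|} = Poly_Mapping.lookup (- gen i) {|i|}"
    by simp
  then show False by (simp add: gen_def lookup_uminus)
qed

lemma T2_subset_T2_if_embedding:
  assumes hom: "\<And>\<sigma> f. h (geval \<sigma> f) = geval (h \<circ> \<sigma>) f"
    and inj0: "\<And>x. h x = 0 \<Longrightarrow> x = 0"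
    and even: "h ` A0 \<subseteq> B0" and odd: "h ` A1 \<subseteq> B1"
  shows "T2 B0 B1 \<subseteq> T2 A0 A1"
proof
  fix f assume f: "f \<in> T2 B0 B1"
  show "f \<in> T2 A0 A1"
    unfolding T2_def
  proof (intro CollectI allI impI)
    fix \<sigma> assume "(\<forall>i. \<sigma> (Yv i) \<in> A0) \<and> (\<forall>i. \<sigma> (Zv i) \<in> A1)"
    then have "(\<forall>i. (h \<circ> \<sigma>) (Yv i) \<in> B0) \<and> (\<forall>i. (h \<circ> \<sigma>) (Zv i) \<in> B1)"
      using even odd by auto
    then have "h (geval \<sigma> f) = 0"
      using f by (simp add: T2_def hom)
    then show "geval \<sigma> f = 0" by (rule inj0)
  qed
qed

definition grass_reindex :: "(nat \<Rightarrow> nat) \<Rightarrow> 'a::field grass \<Rightarrow> 'a grass" where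
  "grass_reindex r x =
     (\<Sum>S\<in>Poly_Mapping.keys x. Poly_Mapping.single (fimage r S) (Poly_Mapping.lookup x S))"

lemma lookup_grass_reindex:
  assumes "inj r"
  shows "Poly_Mapping.lookup (grass_reindex r x) (fimage r S) = Poly_Mapping.lookup x S"
proof -
  have "inj (fimage r)" using assms by (rule fset.inj_map)
  then have "Poly_Mapping.lookup (grass_reindex r x) (fimage r S)
      = (\<Sum>T\<in>Poly_Mapping.keys x. if T = S then Poly_Mapping.lookup x T else 0)"
    unfolding grass_reindex_def lookup_sum
    by (intro sum.cong) (auto simp: lookup_single when_def dest: injD)
  then show ?thesis by (simp add: in_keys_iff)
qed

lemma lookup_grass_reindex_notin_range:
  assumes "U \<notin> range (fimage r)"
  shows "Poly_Mapping.lookup (grass_reindex r x) U = 0"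
  unfolding grass_reindex_def lookup_sum using assms
  by (intro sum.neutral) (auto simp: lookup_single when_def)

lemma keys_grass_reindex:
  assumes "inj r"
  shows "Poly_Mapping.keys (grass_reindex r x) = fimage r ` Poly_Mapping.keys x"
proof (intro set_eqI iffI)
  fix U assume U: "U \<in> Poly_Mapping.keys (grass_reindex r x)"
  then obtain S where S: "U = fimage r S"
    using lookup_grass_reindex_notin_range[of U r x] by (auto simp: in_keys_iff)
  then have "S \<in> Poly_Mapping.keys x"
    using U lookup_grass_reindex[OF assms, of x S] by (simp add: in_keys_iff)
  then show "U \<in> fimage r ` Poly_Mapping.keys x" using S by blast
qed (auto simp: in_keys_iff lookup_grass_reindex[OF assms])

lemma grass_reindex_eq_0_iff:
  assumes "inj r"
  shows "grass_reindex r x = 0 \<longleftrightarrow> x = 0"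
  using keys_grass_reindex[OF assms, of x] by auto

lemma grass_reindex_zero [simp]: "grass_reindex r 0 = 0"
  by (simp add: grass_reindex_def)

lemma grass_reindex_add: "grass_reindex r (x + y) = grass_reindex r x + grass_reindex r y"
  unfolding grass_reindex_def by (rule setsum_keys_plus_distrib) (auto simp: single_add)

lemma grass_reindex_sum: "grass_reindex r (sum g A) = (\<Sum>a\<in>A. grass_reindex r (g a))"
  by (induction A rule: infinite_finite_induct) (simp_all add: grass_reindex_add)

lemma grass_reindex_single [simp]:
  "grass_reindex r (Poly_Mapping.single U c) = Poly_Mapping.single (fimage r U) c"
  by (cases "c = 0") (auto simp: grass_reindex_def)

lemma gsign_fimage_strict_mono:
  assumes "strict_mono r"
  shows "gsign (fimage r S) (fimage r T) = (gsign S T :: 'a::field)"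
proof -
  have "inj r" using assms strict_mono_imp_inj_on by blast
  then have "inj_on (map_prod r r) X" for X
    by (auto simp: inj_on_def dest: injD)
  moreover have "{(s,t). s |\<in>| fimage r S \<and> t |\<in>| fimage r T \<and> t < s}
      = map_prod r r ` {(s,t). s |\<in>| S \<and> t |\<in>| T \<and> t < s}"
    using assms by (auto simp: strict_mono_less image_iff)
  ultimately show ?thesis unfolding gsign_def by (simp add: card_image)
qed

lemma grass_reindex_gmult:
  assumes "strict_mono r"
  shows "grass_reindex r (gmult x y) = gmult (grass_reindex r x) (grass_reindex r (y :: 'a::field grass))"
proof -
  have ij: "inj r" using assms strict_mono_imp_inj_on by blast
  have ijf: "inj (fimage r)" using ij by (rule fset.inj_map)
  define F :: "nat fset \<Rightarrow> nat fset \<Rightarrow> 'a \<Rightarrow> 'a \<Rightarrow> 'a grass" where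
    "F S T a b = (if S |\<inter>| T = {||} then Poly_Mapping.single (S |\<union>| T) (gsign S T * a * b) else 0)"
    for S T a b
  have gmult_F: "gmult u v = (\<Sum>S\<in>Poly_Mapping.keys u. \<Sum>T\<in>Poly_Mapping.keys v.
      F S T (Poly_Mapping.lookup u S) (Poly_Mapping.lookup v T))" for u v
    by (simp add: gmult_def F_def)
  have F_fimage: "F (fimage r S) (fimage r T) a b = grass_reindex r (F S T a b)" for S T a b
  proof -
    have "fimage r S |\<inter>| fimage r T = fimage r (S |\<inter>| T)"
      by (rule fset_eqI) (auto dest: injD[OF ij])
    then show ?thesis by (simp add: F_def gsign_fimage_strict_mono[OF assms] fimage_funion)
  qed
  have "gmult (grass_reindex r x) (grass_reindex r y)
     = (\<Sum>S\<in>Poly_Mapping.keys x. \<Sum>T\<in>Poly_Mapping.keys y.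
          F (fimage r S) (fimage r T) (Poly_Mapping.lookup x S) (Poly_Mapping.lookup y T))"
    unfolding gmult_F keys_grass_reindex[OF ij]
    by (simp add: sum.reindex[OF inj_on_subset[OF ijf]] lookup_grass_reindex[OF ij])
  also have "\<dots> = grass_reindex r (gmult x y)"
    unfolding gmult_F F_fimage grass_reindex_sum ..
  finally show ?thesis by simp
qed

lemma grass_reindex_geval:
  assumes "strict_mono r"
  shows "grass_reindex r (geval \<sigma> f) = geval (grass_reindex r \<circ> \<sigma>) f"
proof -
  have "grass_reindex r (gword \<sigma> w) = gword (grass_reindex r \<circ> \<sigma>) w" for w
    by (induction w) (simp_all add: gword_def gone_def grass_reindex_gmult[OF assms])
  then show ?thesis
    by (simp add: geval_def gsmult_def grass_reindex_sum grass_reindex_gmult[OF assms])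
qed

locale grass_involution =
  fixes \<phi> :: "'a::field grass \<Rightarrow> 'a grass"
  assumes aut: "grass_aut \<phi>"
    and involutive: "\<phi> (\<phi> x) = x"
begin

definition fixed_gens :: "nat set" where
  "fixed_gens = {i. \<phi> (gen i) = gen i}"

definition negated_gens :: "nat set" where
  "negated_gens = {i. \<phi> (gen i) = - gen i}"

lemma phi_add: "\<phi> (x + y) = \<phi> x + \<phi> y"
  and phi_gsmult: "\<phi> (gsmult c x) = gsmult c (\<phi> x)"
  and phi_gmult: "\<phi> (gmult x y) = gmult (\<phi> x) (\<phi> y)"
  using aut by (simp_all add: grass_aut_def)

lemma phi_zero: "\<phi> 0 = 0"
  using phi_add[of 0 0] by simp

lemma phi_sum: "\<phi> (sum g A) = (\<Sum>a\<in>A. \<phi> (g a))"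
  by (induction A rule: infinite_finite_induct) (simp_all add: phi_zero phi_add)

lemma phi_gone: "\<phi> gone = gone"
  using phi_gmult[of gone "\<phi> gone"] by (simp add: involutive)

lemma phi_monomial:
  "fset U \<subseteq> fixed_gens \<union> negated_gens \<Longrightarrow>
   \<phi> (Poly_Mapping.single U c) = Poly_Mapping.single U ((-1) ^ card (fset U \<inter> negated_gens) * c)"
proof (induction U arbitrary: c rule: fset_induct_stronger)
  case empty
  show ?case using phi_gsmult[of c gone] by (simp add: phi_gone gsmult_gone)
next
  case (insert a U)
  define s :: 'a where "s = gsign {|a|} U"
  define e :: 'a where "e = (if a \<in> negated_gens then -1 else 1)"
  have ss: "s * (s * y) = y" for y
    unfolding s_def mult.assoc[symmetric] gsign_square by simp
  have "\<phi> (gen a) = Poly_Mapping.single {|a|} e"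
    using insert.prems by (auto simp: e_def gen_def fixed_gens_def negated_gens_def single_uminus)
  moreover have "Poly_Mapping.single (finsert a U) c = gmult (gen a) (Poly_Mapping.single U (s * c))"
    using insert.hyps by (simp add: gen_def gmult_single s_def[symmetric] mult.assoc ss)
  moreover have "card (fset (finsert a U) \<inter> negated_gens)
      = card (fset U \<inter> negated_gens) + (if a \<in> negated_gens then 1 else 0)"
    using insert.hyps by (auto simp: insert_absorb)
  ultimately show ?case
    using insert by (simp add: phi_gmult gmult_single s_def[symmetric] e_def algebra_simps ss)
qed

lemma phi_grass_reindex_Edeg:
  assumes r: "strict_mono r" "range r \<subseteq> fixed_gens \<union> negated_gens"
    and r_negated: "\<And>i. r i \<in> negated_gens \<longleftrightarrow> i \<in> D"
    and x: "x \<in> Edeg D b"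
  shows "\<phi> (grass_reindex r x) = (if b then - grass_reindex r x else grass_reindex r x)"
proof -
  have "inj r" using r strict_mono_imp_inj_on by blast
  have sign: "(-1::'a) ^ card (fset (fimage r S) \<inter> negated_gens) = (if b then -1 else 1)"
    if "S \<in> Poly_Mapping.keys x" for S
  proof -
    have "fset (fimage r S) \<inter> negated_gens = r ` (fset S \<inter> D)" using r_negated by auto
    then have "card (fset (fimage r S) \<inter> negated_gens) = card (fset S \<inter> D)"
      using \<open>inj r\<close> by (simp add: card_image inj_on_subset)
    moreover have "odd (card (fset S \<inter> D)) = b" using x that by (simp add: Edeg_def)
    ultimately show ?thesis by (cases b) auto
  qed
  have "\<phi> (grass_reindex r x) = (\<Sum>S\<in>Poly_Mapping.keys x.
      Poly_Mapping.single (fimage r S) ((if b then -1 else 1) * Poly_Mapping.lookup x S))"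
    unfolding grass_reindex_def phi_sum
  proof (intro sum.cong refl)
    fix S assume "S \<in> Poly_Mapping.keys x"
    moreover have "fset (fimage r S) \<subseteq> fixed_gens \<union> negated_gens" using r(2) by auto
    ultimately show "\<phi> (Poly_Mapping.single (fimage r S) (Poly_Mapping.lookup x S))
        = Poly_Mapping.single (fimage r S) ((if b then -1 else 1) * Poly_Mapping.lookup x S)"
      using phi_monomial sign by presburger
  qed
  then show ?thesis
    by (cases b) (simp_all add: grass_reindex_def single_uminus sum_negf)
qed

lemma T2_Ephi_subset_T2_Edeg:
  assumes "strict_mono r" "range r \<subseteq> fixed_gens \<union> negated_gens"
    and "\<And>i. r i \<in> negated_gens \<longleftrightarrow> i \<in> D"
  shows "T2 (Ephi0 \<phi>) (Ephi1 \<phi>) \<subseteq> T2 (Edeg D False) (Edeg D True)"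
  using phi_grass_reindex_Edeg[OF assms]
  by (intro T2_subset_T2_if_embedding[of "grass_reindex r"])
    (auto simp: grass_reindex_geval[OF assms(1)] grass_reindex_eq_0_iff strict_mono_imp_inj_on
       assms(1) Ephi0_def Ephi1_def)

end

lemma strict_mono_enumerate_finite_then_infinite:
  fixes A B :: "nat set"
  assumes A: "finite A" "card A = k" and B: "infinite B"
  obtains r where "strict_mono r" "range r \<subseteq> A \<union> B" "\<And>i. r i \<in> A \<longleftrightarrow> i < k"
proof -
  obtain m where m: "\<forall>a\<in>A. a < m" using A(1) finite_nat_bounded by blast
  define B' where "B' = B \<inter> {m..}"
  have "B \<subseteq> B' \<union> {..<m}" unfolding B'_def by auto
  then have B': "infinite B'"
    using B finite_subset by blast
  define r where "r i = (if i < k then enumerate A i else enumerate B' (i - k))" for i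
  have rA: "i < k \<Longrightarrow> r i \<in> A" for i
    unfolding r_def using A by (simp add: finite_enumerate_in_set)
  have rB': "\<not> i < k \<Longrightarrow> r i \<in> B'" for i
    unfolding r_def using B' by (simp add: enumerate_in_set)
  have "r i < r j" if "i < j" for i j
  proof (cases "j < k")
    case True
    then show ?thesis using that A unfolding r_def by (simp add: finite_enumerate_mono)
  next
    case j: False
    show ?thesis
    proof (cases "i < k")
      case True
      then have "r i < m" using rA m by blast
      moreover have "m \<le> r j" using rB'[OF j] B'_def by auto
      ultimately show ?thesis by simp
    next
      case False
      then show ?thesis using that j B' unfolding r_def by (simp add: enumerate_mono)
    qed
  qed
  then have "strict_mono r" by (rule strict_monoI)
  moreover have "range r \<subseteq> A \<union> B" using rA rB' B'_def by blast
  moreover have "r i \<in> A \<longleftrightarrow> i < k" for i using rA rB' m B'_def by fastforce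
  ultimately show ?thesis by (rule that)
qed

theorem mainTheorem5:
  fixes \<phi> :: "'a::field_char_0 grass \<Rightarrow> 'a grass"
  assumes aut: "grass_aut \<phi>"
    and inv: "\<forall>x. \<phi> (\<phi> x) = x"
  defines
 "Ip \<equiv> {i. \<phi> (gen i) = gen i}"
    and "Im \<equiv> {i. \<phi> (gen i) = - gen i}"
    and "J \<equiv> UNIV - {n. \<phi> (gen n) = gen n \<or> \<phi> (gen n) = - gen n}"
  shows "(\<forall>k. infinite Ip \<and> finite Im \<and> card Im = k \<and> infinite J
            \<longrightarrow> T2 (Ephi0 \<phi>) (Ephi1 \<phi>) \<subseteq> T2 (Eks0 k) (Eks1 k))
       \<and> (\<forall>k. finite Ip \<and> card Ip = k \<and> infinite Im \<and> infinite J
            \<longrightarrow> T2 (Ephi0 \<phi>) (Ephi1 \<phi>) \<subseteq> T2 (Ek0 k) (Ek1 k))"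
proof -
  interpret grass_involution \<phi> using aut inv by unfold_locales auto
  have Ip: "Ip = fixed_gens" and Im: "Im = negated_gens"
    by (simp_all add: Ip_def Im_def fixed_gens_def negated_gens_def)
  have disjoint: "fixed_gens \<inter> negated_gens = {}"
    unfolding fixed_gens_def negated_gens_def
    using gen_neq_uminus_gen by (metis (mono_tags, lifting) disjoint_iff mem_Collect_eq)
  show ?thesis
  proof (intro conjI allI impI)
    fix k assume "infinite Ip \<and> finite Im \<and> card Im = k \<and> infinite J"
    then obtain r where "strict_mono r" "range r \<subseteq> negated_gens \<union> fixed_gens"
        "\<And>i. r i \<in> negated_gens \<longleftrightarrow> i \<in> {..<k}"
      using strict_mono_enumerate_finite_then_infinite[of negated_gens k fixed_gens]
      unfolding Ip Im by auto
    then show "T2 (Ephi0 \<phi>) (Ephi1 \<phi>) \<subseteq> T2 (Eks0 k) (Eks1 k)"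
      unfolding Eks0_def Eks1_def by (intro T2_Ephi_subset_T2_Edeg) auto
  next
    fix k assume "finite Ip \<and> card Ip = k \<and> infinite Im \<and> infinite J"
    then obtain r where r: "strict_mono r" "range r \<subseteq> fixed_gens \<union> negated_gens"
        "\<And>i. r i \<in> fixed_gens \<longleftrightarrow> i < k"
      using strict_mono_enumerate_finite_then_infinite[of fixed_gens k negated_gens]
      unfolding Ip Im by auto
    then have "r i \<in> negated_gens \<longleftrightarrow> i \<in> {k..}" for i
      using disjoint by (auto simp: not_less[symmetric])
    with r show "T2 (Ephi0 \<phi>) (Ephi1 \<phi>) \<subseteq> T2 (Ek0 k) (Ek1 k)"
      unfolding Ek0_def Ek1_def by (intro T2_Ephi_subset_T2_Edeg) auto
  qed
qed

end
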